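(* Let $X$ be a separable Hilbert space, $N\ge1$, and $F\subset H^2(\mathbb{D},X)$ a family of functions. Then $F$ is cyclic for $S^*$ in $H^2(\mathbb{D},X)$ if and only if the family $\{\Psi_N(S^{*j}f): f\in F,\ 0\le j\le N-1\}$ is cyclic for $S^*$ in $H^2(\mathbb{D},X^N)$.
   Context: $\Psi_N:H^2(\mathbb{D},X)\to H^2(\mathbb{D},X^N)$ is defined by $\Psi_N(f)(z)=\sum_{k\ge0}\big(\hat f(Nk),\hat f(Nk+1),\dots,\hat f(Nk+N-1)\big)z^k$. $S^*$ is the backward shift; a family $G$ is cyclic if the closed span of $\{S^{*n}g:n\ge0,g\in G\}$ is the whole space. *)

theory Defs
  imports "HOL-Analysis.Analysis"
begin

text \<open>A complex Hilbert space: a real Hilbert space together with a compatible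
  multiplication by complex scalars (the real inner product is the real part of the
  complex one).\<close>
class complex_hilbert = real_inner + complete_space +
  fixes cscale :: "complex \<Rightarrow> 'a \<Rightarrow> 'a"
  assumes cscale_of_real: "cscale (complex_of_real r) x = scaleR r x"
    and cscale_add_left: "cscale (a + b) x = cscale a x + cscale b x"
    and cscale_add_right: "cscale a (x + y) = cscale a x + cscale a y"
    and cscale_mult: "cscale (a * b) x = cscale a (cscale b x)"
    and norm_cscale: "norm (cscale a x) = cmod a * norm x"

text \<open>H^2(D,X) is modelled through Taylor coefficients: f(z) = sum_n f n z^n
  with sum_n norm (f n)^2 finite.\<close>
definition H2 :: "(nat \<Rightarrow> 'a::real_normed_vector) set" where
  "H2 = {f. summable (\<lambda>n. (norm (f n))\<^sup>2)}"

definition H2_norm2 :: "(nat \<Rightarrow> 'a::real_normed_vector) \<Rightarrow> real" where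
  "H2_norm2 f = (\<Sum>n. (norm (f n))\<^sup>2)"

text \<open>H^2(D,X^N): coefficient k is the N-tuple (g k 0, ..., g k (N-1)); entries
  at indices i \<ge> N are required to vanish.\<close>
definition H2N :: "nat \<Rightarrow> (nat \<Rightarrow> nat \<Rightarrow> 'a::real_normed_vector) set" where
  "H2N N = {g. (\<forall>k i. N \<le> i \<longrightarrow> g k i = 0) \<and>
               summable (\<lambda>k. \<Sum>i<N. (norm (g k i))\<^sup>2)}"

definition H2N_norm2 :: "nat \<Rightarrow> (nat \<Rightarrow> nat \<Rightarrow> 'a::real_normed_vector) \<Rightarrow> real" where
  "H2N_norm2 N g = (\<Sum>k. \<Sum>i<N. (norm (g k i))\<^sup>2)"

text \<open>Backward shift S^*: (S^* f)(z) = (f(z) - f(0))/z, i.e. shift of coefficients.\<close>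
definition bshift :: "(nat \<Rightarrow> 'b) \<Rightarrow> nat \<Rightarrow> 'b" where
  "bshift f = (\<lambda>n. f (Suc n))"

definition cspan_H2 :: "(nat \<Rightarrow> 'a::complex_hilbert) set \<Rightarrow> (nat \<Rightarrow> 'a) set" where
  "cspan_H2 S = {v. \<exists>A c. finite A \<and> A \<subseteq> S \<and>
                     v = (\<lambda>n. \<Sum>a\<in>A. cscale (c a) (a n))}"

definition cspan_H2N :: "(nat \<Rightarrow> nat \<Rightarrow> 'a::complex_hilbert) set \<Rightarrow> (nat \<Rightarrow> nat \<Rightarrow> 'a) set" where
  "cspan_H2N S = {v. \<exists>A c. finite A \<and> A \<subseteq> S \<and>
                     v = (\<lambda>k i. \<Sum>a\<in>A. cscale (c a) (a k i))}"

text \<open>G is cyclic for S^*: the closed (complex) linear span of the S^*-orbits of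
  G is the whole space, i.e. that span is dense in the H^2 norm.\<close>
definition cyclic_H2 :: "(nat \<Rightarrow> 'a::complex_hilbert) set \<Rightarrow> bool" where
  "cyclic_H2 G \<longleftrightarrow>
     (\<forall>h\<in>H2. \<forall>e>0. \<exists>v\<in>cspan_H2 {(bshift ^^ n) g | n g. g \<in> G}.
        H2_norm2 (\<lambda>n. h n - v n) < e)"

definition cyclic_H2N :: "nat \<Rightarrow> (nat \<Rightarrow> nat \<Rightarrow> 'a::complex_hilbert) set \<Rightarrow> bool" where
  "cyclic_H2N N G \<longleftrightarrow>
     (\<forall>h\<in>H2N N. \<forall>e>0. \<exists>v\<in>cspan_H2N {(bshift ^^ n) g | n g. g \<in> G}.
        H2N_norm2 N (\<lambda>k i. h k i - v k i) < e)"

text \<open>Psi_N(f)(z) = sum_k (f^(Nk), ..., f^(Nk+N-1)) z^k.\<close>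
definition PsiN :: "nat \<Rightarrow> (nat \<Rightarrow> 'a::zero) \<Rightarrow> nat \<Rightarrow> nat \<Rightarrow> 'a" where
  "PsiN N f = (\<lambda>k i. if i < N then f (N * k + i) else 0)"

end

theory Submission
  imports Defs
begin

text \<open>
  Proof idea.  The map Psi_N regroups the Taylor coefficients of f into
  consecutive blocks of length N.  In the coefficient model used here it is

  (1) a bijection from H2 onto H2N N (every block sequence comes from a unique
      coefficient sequence),
  (2) an isometry: regrouping a series of nonnegative terms into finite blocks
      changes neither its convergence nor its sum,
  (3) complex linear, so it maps the span of a set onto the span of its image, and
  (4) it intertwines the shifts: S* on H2N N corresponds to S*^N on H2, hence the
      S*-orbit of the family {Psi_N (S*^j f) | f in F, j < N} is exactly the image of
      the S*-orbit of F.

  Consequently the density of the span of one orbit is equivalent to the density of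
  the span of the other, which is the theorem.
\<close>

lemma bshift_pow: "(bshift ^^ n) f = (\<lambda>m. f (m + n))"
  by (induction n arbitrary: f) (auto simp: bshift_def funpow_Suc_right)

definition orbit :: "(nat \<Rightarrow> 'b) set \<Rightarrow> (nat \<Rightarrow> 'b) set" where
  "orbit G = {(bshift ^^ n) g | n g. g \<in> G}"

lemma sum_block: "sum f {k * N..<k * N + N} = (\<Sum>i<N. f (N * k + i :: nat))"
proof -
  have "sum f {k * N..<k * N + N} = sum (\<lambda>i. f (i + k * N)) {0..<N}"
    using sum.shift_bounds_nat_ivl[of f 0 "k * N" N] by (simp add: add.commute)
  then show ?thesis by (simp add: atLeast0LessThan add.commute mult.commute)
qed

lemma sums_blocks_iff:
  fixes f :: "nat \<Rightarrow> real"
  assumes N: "N \<ge> 1" and nonneg: "\<And>n. 0 \<le> f n"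
  shows "(\<lambda>k. \<Sum>i<N. f (N * k + i)) sums s \<longleftrightarrow> f sums s"
proof
  assume blocks: "(\<lambda>k. \<Sum>i<N. f (N * k + i)) sums s"
  have "summable f"
  proof (rule summableI_nonneg_bounded)
    fix n
    have "(\<Sum>i<n. f i) \<le> (\<Sum>i<n * N. f i)"
      using N by (intro sum_mono2) (auto simp: nonneg)
    also have "\<dots> = (\<Sum>k<n. \<Sum>i<N. f (N * k + i))"
      by (simp add: sum.nat_group[symmetric] sum_block)
    also have "\<dots> \<le> (\<Sum>k. \<Sum>i<N. f (N * k + i))"
      using blocks by (intro sum_le_suminf) (auto simp: sums_iff nonneg intro: sum_nonneg)
    also have "\<dots> = s"
      using blocks by (simp add: sums_iff)
    finally show "(\<Sum>i<n. f i) \<le> s" .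
  qed (rule nonneg)
  then have "(\<lambda>k. \<Sum>i<N. f (N * k + i)) sums suminf f"
    using sums_group[of f "suminf f" N] N by (simp add: summable_sums sum_block)
  then show "f sums s"
    using blocks sums_unique2 \<open>summable f\<close> summable_sums by blast
next
  assume "f sums s"
  then show "(\<lambda>k. \<Sum>i<N. f (N * k + i)) sums s"
    using sums_group[of f s N] N by (simp add: sum_block)
qed

text \<open>Consequently both series are summable together and have the same value
  (suminf is a definite description over the same predicate, so this needs no
  summability hypothesis).\<close>
lemma blocks_summable_suminf:
  fixes f :: "nat \<Rightarrow> real"
  assumes "N \<ge> 1" and "\<And>n. 0 \<le> f n"
  shows "summable (\<lambda>k. \<Sum>i<N. f (N * k + i)) \<longleftrightarrow> summable f"
    and "(\<Sum>k. \<Sum>i<N. f (N * k + i)) = suminf f"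
proof -
  have "(sums) (\<lambda>k. \<Sum>i<N. f (N * k + i)) = (sums) f"
    using sums_blocks_iff[OF assms] by (rule ext)
  then show "summable (\<lambda>k. \<Sum>i<N. f (N * k + i)) \<longleftrightarrow> summable f"
    and "(\<Sum>k. \<Sum>i<N. f (N * k + i)) = suminf f"
    by (simp_all add: summable_def suminf_def)
qed

lemma PsiN_nth [simp]: "i < N \<Longrightarrow> PsiN N f k i = f (N * k + i)"
  by (simp add: PsiN_def)

lemma PsiN_in_H2N_iff:
  fixes u :: "nat \<Rightarrow> 'a::real_normed_vector"
  assumes "N \<ge> 1"
  shows "PsiN N u \<in> H2N N \<longleftrightarrow> u \<in> H2"
  using blocks_summable_suminf(1)[OF assms, of "\<lambda>n. (norm (u n))\<^sup>2"]
  by (simp add: H2N_def H2_def PsiN_def)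

lemma PsiN_norm2:
  fixes u :: "nat \<Rightarrow> 'a::real_normed_vector"
  assumes "N \<ge> 1"
  shows "H2N_norm2 N (PsiN N u) = H2_norm2 u"
  using blocks_summable_suminf(2)[OF assms, of "\<lambda>n. (norm (u n))\<^sup>2"]
  by (simp add: H2N_norm2_def H2_norm2_def)

text \<open>Every element of H2N N is the regrouping of a sequence (read its blocks in order).\<close>
lemma H2N_eq_PsiN_image:
  fixes N :: nat
  assumes N: "N \<ge> 1"
  shows "H2N N = PsiN N ` (H2 :: (nat \<Rightarrow> 'a::real_normed_vector) set)"
proof (intro equalityI subsetI)
  fix g :: "nat \<Rightarrow> nat \<Rightarrow> 'a" assume g: "g \<in> H2N N"
  define h where "h m = g (m div N) (m mod N)" for m
  have "g = PsiN N h"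
    using g N unfolding H2N_def PsiN_def h_def by (auto intro!: ext)
  with g show "g \<in> PsiN N ` H2"
    using PsiN_in_H2N_iff[OF N] by blast
qed (use PsiN_in_H2N_iff[OF N] in blast)

text \<open>Psi_N loses no coefficient: m is recovered as N (m div N) + m mod N.\<close>
lemma PsiN_inj:
  assumes "N \<ge> 1" shows "inj (PsiN N)"
proof (rule injI)
  fix f g :: "nat \<Rightarrow> 'b::zero" assume eq: "PsiN N f = PsiN N g"
  show "f = g"
  proof
    fix m
    have "m = N * (m div N) + m mod N" by simp
    moreover have "m mod N < N" using assms by simp
    ultimately show "f m = g m"
      using fun_cong[OF fun_cong[OF eq, of "m div N"], of "m mod N"] by (simp add: PsiN_def)
  qed
qed

lemma PsiN_diff:
  "(\<lambda>k i. PsiN N h k i - PsiN N v k i) = PsiN N (\<lambda>n. h n - v n :: 'a::ab_group_add)"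
  by (auto simp: PsiN_def intro!: ext)

lemma cscale_zero_right: "cscale a (0::'a::complex_hilbert) = 0"
  using cscale_add_right[of a "0::'a" 0] by simp

text \<open>Psi_N commutes with finite complex linear combinations (injectivity lets us
  index the coefficients by the preimages).\<close>
lemma PsiN_lincomb:
  fixes B :: "(nat \<Rightarrow> 'a::complex_hilbert) set"
  assumes "N \<ge> 1"
  shows "(\<lambda>k i. \<Sum>a\<in>PsiN N ` B. cscale (c a) (a k i))
       = PsiN N (\<lambda>n. \<Sum>b\<in>B. cscale (c (PsiN N b)) (b n))"
proof (intro ext)
  fix k i
  have inj: "inj_on (PsiN N) B" using PsiN_inj[OF assms] by (rule inj_on_subset) simp
  show "(\<Sum>a\<in>PsiN N ` B. cscale (c a) (a k i))
      = PsiN N (\<lambda>n. \<Sum>b\<in>B. cscale (c (PsiN N b)) (b n)) k i"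
    by (subst sum.reindex[OF inj]) (simp add: PsiN_def cscale_zero_right)
qed

lemma cspan_H2N_PsiN_image:
  fixes S :: "(nat \<Rightarrow> 'a::complex_hilbert) set"
  assumes N: "N \<ge> 1"
  shows "cspan_H2N (PsiN N ` S) = PsiN N ` cspan_H2 S"
proof (intro equalityI subsetI)
  fix w assume "w \<in> cspan_H2N (PsiN N ` S)"
  then obtain A c where A: "finite A" "A \<subseteq> PsiN N ` S"
    and w: "w = (\<lambda>k i. \<Sum>a\<in>A. cscale (c a) (a k i))"
    unfolding cspan_H2N_def by blast
  obtain B where B: "B \<subseteq> S" "finite B" "A = PsiN N ` B"
    using finite_subset_image[OF A] by blast
  have "w = PsiN N (\<lambda>n. \<Sum>b\<in>B. cscale (c (PsiN N b)) (b n))"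
    unfolding w B(3) by (rule PsiN_lincomb[OF N])
  moreover have "(\<lambda>n. \<Sum>b\<in>B. cscale (c (PsiN N b)) (b n)) \<in> cspan_H2 S"
    unfolding cspan_H2_def mem_Collect_eq
    by (rule exI[of _ B], rule exI[of _ "\<lambda>b. c (PsiN N b)"]) (simp add: B)
  ultimately show "w \<in> PsiN N ` cspan_H2 S" by blast
next
  fix w assume "w \<in> PsiN N ` cspan_H2 S"
  then obtain v where v: "v \<in> cspan_H2 S" and wv: "w = PsiN N v" by blast
  from v obtain B c where B: "finite B" "B \<subseteq> S"
    and w: "w = PsiN N (\<lambda>n. \<Sum>b\<in>B. cscale (c b) (b n))"
    unfolding cspan_H2_def wv by blast
  have inj: "inj_on (PsiN N) B" using PsiN_inj[OF N] by (rule inj_on_subset) simp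
  define c' where "c' = c \<circ> the_inv_into B (PsiN N)"
  have "(\<lambda>n. \<Sum>b\<in>B. cscale (c b) (b n)) = (\<lambda>n. \<Sum>b\<in>B. cscale (c' (PsiN N b)) (b n))"
    unfolding c'_def by (intro ext sum.cong) (simp_all add: the_inv_into_f_f[OF inj])
  then have "w = (\<lambda>k i. \<Sum>a\<in>PsiN N ` B. cscale (c' a) (a k i))"
    unfolding w PsiN_lincomb[OF N] by simp
  then show "w \<in> cspan_H2N (PsiN N ` S)"
    unfolding cspan_H2N_def mem_Collect_eq
    by (intro exI[of _ "PsiN N ` B"] exI[of _ c']) (simp add: B image_mono)
qed

lemma bshift_pow_PsiN: "(bshift ^^ n) (PsiN N f) = PsiN N ((bshift ^^ (N * n)) f)"
  by (auto simp: bshift_pow PsiN_def algebra_simps intro!: ext)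

text \<open>The orbit of the N regrouped shifts of F is the regrouping of the orbit of F:
  S*^m f is S*^(m div N) applied to Psi_N (S*^(m mod N) f).\<close>
lemma orbit_PsiN_shifts:
  assumes N: "N \<ge> 1"
  shows "orbit {PsiN N ((bshift ^^ j) f) | f j. f \<in> F \<and> j < N} = PsiN N ` orbit F"
proof (intro equalityI subsetI)
  fix x assume "x \<in> orbit {PsiN N ((bshift ^^ j) f) | f j. f \<in> F \<and> j < N}"
  then obtain n f j where x: "x = (bshift ^^ n) (PsiN N ((bshift ^^ j) f))" and "f \<in> F"
    unfolding orbit_def by blast
  moreover have "x = PsiN N ((bshift ^^ (N * n + j)) f)"
    unfolding x bshift_pow_PsiN by (simp add: funpow_add)
  ultimately show "x \<in> PsiN N ` orbit F" unfolding orbit_def by blast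
next
  fix x assume "x \<in> PsiN N ` orbit F"
  then obtain m f where x: "x = PsiN N ((bshift ^^ m) f)" and "f \<in> F"
    unfolding orbit_def by blast
  moreover have "x = (bshift ^^ (m div N)) (PsiN N ((bshift ^^ (m mod N)) f))"
    unfolding bshift_pow_PsiN x by (simp add: bshift_pow add.assoc mod_mult_div_eq)
  moreover have "m mod N < N" using N by simp
  ultimately show "x \<in> orbit {PsiN N ((bshift ^^ j) f) | f j. f \<in> F \<and> j < N}"
    unfolding orbit_def by blast
qed

text \<open>If the orbit of G is the regrouping of the orbit of F, then F is cyclic in H2
  iff G is cyclic in H2N N: Psi_N is an isometric bijection carrying one span onto
  the other.\<close>
lemma cyclic_transfer:
  fixes F :: "(nat \<Rightarrow> 'a::complex_hilbert) set"
  assumes N: "N \<ge> 1" and orb: "orbit G = PsiN N ` orbit F"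
  shows "cyclic_H2 F \<longleftrightarrow> cyclic_H2N N G"
proof -
  have "cyclic_H2N N G \<longleftrightarrow>
      (\<forall>h\<in>PsiN N ` H2. \<forall>e>0. \<exists>v\<in>PsiN N ` cspan_H2 (orbit F).
         H2N_norm2 N (\<lambda>k i. h k i - v k i) < e)"
    unfolding cyclic_H2N_def orbit_def[symmetric] orb H2N_eq_PsiN_image[OF N]
      cspan_H2N_PsiN_image[OF N] ..
  also have "\<dots> \<longleftrightarrow> cyclic_H2 F"
    unfolding cyclic_H2_def orbit_def[symmetric]
    by (simp add: PsiN_diff PsiN_norm2[OF N])
  finally show ?thesis by simp
qed

theorem mainTheorem15:
  fixes F :: "(nat \<Rightarrow> 'a::complex_hilbert) set" and N :: nat
  assumes separable: "\<exists>D::'a set. countable D \<and> closure D = UNIV"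
    and N: "N \<ge> 1"
    and F: "F \<subseteq> H2"
  shows "cyclic_H2 F \<longleftrightarrow>
         cyclic_H2N N {PsiN N ((bshift ^^ j) f) | f j. f \<in> F \<and> j < N}"
  using N orbit_PsiN_shifts[OF N] by (rule cyclic_transfer)

end
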